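(* Let $\langle A, \leq, \otimes, \ominus, \mathbf{1}\rangle$ be a residuated partially ordered monoid with bottom element $\bot$. Let $Lex_\omega(A) = I(A)^\omega \cup I(A)^\ast A \{\bot\}^\omega$, with componentwise operation $\otimes^\omega$, identity $\mathbf{1}^\omega$, and order $a \leq_\omega b$ iff $a_{\leq k} \leq_k b_{\leq k}$ for all $k\geq1$. Then $\langle Lex_\omega(A), \leq_\omega, \otimes^\omega, \ominus_\omega, \mathbf{1}^\omega\rangle$ is a residuated partially ordered monoid, where for $a,b\in Lex_\omega(A)$: $$a \ominus_\omega b = \begin{cases} (a_1 \ominus b_1) \ldots (a_k \ominus b_k) \ldots & \text{if } \infty = \gamma(a,b) = \delta(a,b),\\ (a_1 \ominus b_1) \ldots (a_{\gamma(a,b)} \ominus b_{\gamma(a,b)})\,\bot^\omega & \text{if } \infty \neq \gamma(a,b) \leq \delta(a,b),\\ (a_1 \ominus b_1) \ldots (a_{\delta(a,b)} \ominus b_{\delta(a,b)})\,\big(\bigvee Lex_\omega(A)\big) & \text{otherwise.}\end{cases}$$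
   Context: A residuated partially ordered monoid $\langle A, \leq, \otimes, \ominus, \mathbf{1}\rangle$ consists of a partial order $\langle A,\leq\rangle$, a commutative monoid $\langle A,\otimes,\mathbf{1}\rangle$, and a binary operation $\ominus$ with $b \otimes c \leq a$ iff $c \leq a \ominus b$ for all $a,b,c\in A$. $a<b$ means $a\leq b$, $a\neq b$. $I(A) = \{c \in A \mid \forall a,b \in A.\ a \otimes c = b \otimes c \Rightarrow a = b\}$, $C(A)=A\setminus I(A)$. $I(A)^\omega$: infinite sequences over $I(A)$; $I(A)^\ast A\{\bot\}^\omega$: infinite sequences consisting of a finite (possibly empty) sequence over $I(A)$, then one element of $A$, then infinitely many $\bot$. $a_{\leq k}$ is the length-$k$ prefix $a_1\ldots a_k$. The order $\leq_k$ on $A^k$: $\leq_1=\leq$, and for $k\geq2$, $a_1 \ldots a_k \leq_k b_1 \ldots b_k$ iff $a_1 < b_1$, or $a_1 = b_1$ and $a_2 \ldots a_k \leq_{k-1} b_2 \ldots b_k$. $\bot^\omega$ is the constant sequence $\bot\bot\ldots$; $\bigvee Lex_\omega(A)$ is the greatest element of $Lex_\omega(A)$ w.r.t. $\leq_\omega$; in the third case the result is the finite prefix followed by that infinite sequence. For $a,b\in Lex_\omega(A)$: $\gamma(a,b) = \min\{ i \mid a_i \ominus b_i \in C(A)\}$ and $\delta(a,b) = \min\{ i \mid (a_i \ominus b_i) \otimes b_i < a_i\}$, each equal to $\infty$ if the set is empty. *)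

theory Defs
  imports "HOL-Library.Extended_Nat"
begin

definition residuated_pom ::
  "'a set \<Rightarrow> ('a \<Rightarrow> 'a \<Rightarrow> bool) \<Rightarrow> ('a \<Rightarrow> 'a \<Rightarrow> 'a) \<Rightarrow> ('a \<Rightarrow> 'a \<Rightarrow> 'a) \<Rightarrow> 'a \<Rightarrow> bool" where
  "residuated_pom S le mult res one \<longleftrightarrow>
     (\<forall>a\<in>S. le a a) \<and>
     (\<forall>a\<in>S. \<forall>b\<in>S. le a b \<and> le b a \<longrightarrow> a = b) \<and>
     (\<forall>a\<in>S. \<forall>b\<in>S. \<forall>c\<in>S. le a b \<and> le b c \<longrightarrow> le a c) \<and>
     one \<in> S \<and>
     (\<forall>a\<in>S. \<forall>b\<in>S. mult a b \<in> S) \<and>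
     (\<forall>a\<in>S. \<forall>b\<in>S. res a b \<in> S) \<and>
     (\<forall>a\<in>S. \<forall>b\<in>S. \<forall>c\<in>S. mult (mult a b) c = mult a (mult b c)) \<and>
     (\<forall>a\<in>S. \<forall>b\<in>S. mult a b = mult b a) \<and>
     (\<forall>a\<in>S. mult a one = a) \<and>
     (\<forall>a\<in>S. \<forall>b\<in>S. \<forall>c\<in>S. le (mult b c) a \<longleftrightarrow> le c (res a b))"

definition Icanc :: "('a \<Rightarrow> 'a \<Rightarrow> 'a) \<Rightarrow> 'a set" where
  "Icanc mult = {c. \<forall>a b. mult a c = mult b c \<longrightarrow> a = b}"

definition Ccanc :: "('a \<Rightarrow> 'a \<Rightarrow> 'a) \<Rightarrow> 'a set" where
  "Ccanc mult = UNIV - Icanc mult"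

text \<open>Sequences are 0-indexed: the paper's a_{i} is (a (i-1)).
  Lex_omega(A) = I(A)^omega \<union> I(A)^* A {bt}^omega.\<close>
definition Lex_omega :: "('a \<Rightarrow> 'a \<Rightarrow> 'a) \<Rightarrow> 'a \<Rightarrow> (nat \<Rightarrow> 'a) set" where
  "Lex_omega mult bt =
     {s. (\<forall>i. s i \<in> Icanc mult) \<or>
         (\<exists>n. (\<forall>i<n. s i \<in> Icanc mult) \<and> (\<forall>i>n. s i = bt))}"

definition strict :: "('a \<Rightarrow> 'a \<Rightarrow> bool) \<Rightarrow> 'a \<Rightarrow> 'a \<Rightarrow> bool" where
  "strict le x y \<longleftrightarrow> le x y \<and> x \<noteq> y"

fun lex_k :: "('a \<Rightarrow> 'a \<Rightarrow> bool) \<Rightarrow> nat \<Rightarrow> (nat \<Rightarrow> 'a) \<Rightarrow> (nat \<Rightarrow> 'a) \<Rightarrow> bool" where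
  "lex_k le 0 a b = True"
| "lex_k le (Suc 0) a b = le (a 0) (b 0)"
| "lex_k le (Suc (Suc k)) a b =
     (strict le (a 0) (b 0) \<or>
      (a 0 = b 0 \<and> lex_k le (Suc k) (\<lambda>i. a (Suc i)) (\<lambda>i. b (Suc i))))"

definition lex_omega_le :: "('a \<Rightarrow> 'a \<Rightarrow> bool) \<Rightarrow> (nat \<Rightarrow> 'a) \<Rightarrow> (nat \<Rightarrow> 'a) \<Rightarrow> bool" where
  "lex_omega_le le a b \<longleftrightarrow> (\<forall>k\<ge>1. lex_k le k a b)"

text \<open>gamma and delta, as 1-based indices (infinity if the set is empty).\<close>
definition gamma :: "('a \<Rightarrow> 'a \<Rightarrow> 'a) \<Rightarrow> ('a \<Rightarrow> 'a \<Rightarrow> 'a) \<Rightarrow> (nat \<Rightarrow> 'a) \<Rightarrow> (nat \<Rightarrow> 'a) \<Rightarrow> enat" where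
  "gamma mult res a b =
     (if \<exists>i. res (a i) (b i) \<in> Ccanc mult
      then enat (Suc (LEAST i. res (a i) (b i) \<in> Ccanc mult)) else \<infinity>)"

definition delta :: "('a \<Rightarrow> 'a \<Rightarrow> bool) \<Rightarrow> ('a \<Rightarrow> 'a \<Rightarrow> 'a) \<Rightarrow> ('a \<Rightarrow> 'a \<Rightarrow> 'a) \<Rightarrow> (nat \<Rightarrow> 'a) \<Rightarrow> (nat \<Rightarrow> 'a) \<Rightarrow> enat" where
  "delta le mult res a b =
     (if \<exists>i. strict le (mult (res (a i) (b i)) (b i)) (a i)
      then enat (Suc (LEAST i. strict le (mult (res (a i) (b i)) (b i)) (a i))) else \<infinity>)"

definition lex_top :: "('a \<Rightarrow> 'a \<Rightarrow> bool) \<Rightarrow> ('a \<Rightarrow> 'a \<Rightarrow> 'a) \<Rightarrow> 'a \<Rightarrow> nat \<Rightarrow> 'a" where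
  "lex_top le mult bt =
     (THE g. g \<in> Lex_omega mult bt \<and> (\<forall>x\<in>Lex_omega mult bt. lex_omega_le le x g))"

definition res_omega ::
  "('a \<Rightarrow> 'a \<Rightarrow> bool) \<Rightarrow> ('a \<Rightarrow> 'a \<Rightarrow> 'a) \<Rightarrow> ('a \<Rightarrow> 'a \<Rightarrow> 'a) \<Rightarrow> 'a \<Rightarrow>
   (nat \<Rightarrow> 'a) \<Rightarrow> (nat \<Rightarrow> 'a) \<Rightarrow> nat \<Rightarrow> 'a" where
  "res_omega le mult res bt a b =
     (let g = gamma mult res a b; d = delta le mult res a b in
      if g = \<infinity> \<and> d = \<infinity> then (\<lambda>i. res (a i) (b i))
      else if g \<noteq> \<infinity> \<and> g \<le> d then (\<lambda>i. if enat i < g then res (a i) (b i) else bt)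
      else (\<lambda>i. if enat i < d then res (a i) (b i)
                 else lex_top le mult bt (i - the_enat d)))"

end

theory Submission
  imports Defs
begin

text \<open>
  For sequences, a \<le>\<omega> b holds iff a(j) \<le> b(j) at every index j below which a and b agree.
  By componentwise residuation, b \<otimes> c \<le>\<omega> a thus means c(j) \<le> a(j) \<ominus> b(j) whenever
  b(i) \<otimes> c(i) = a(i) for all i < j. The residual follows a(i) \<ominus> b(i) while these entries are
  cancellative and exact, i.e. b(i) \<otimes> (a(i) \<ominus> b(i)) = a(i). Any c in Lex\<omega> that agrees with it
  up to a non-cancellative entry is \<bottom> afterwards, so the residual continues with \<bottom>; if c
  agrees with it up to an inexact entry, then already b \<otimes> c <\<omega> a, so the residual continues
  with the top of Lex\<omega>. Conversely, if b(k) \<otimes> c(k) = a(k) but c(k) < a(k) \<ominus> b(k), then b(k)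
  cannot be cancellative, so all later b(j) are \<bottom> and c(j) \<le> a(j) \<ominus> \<bottom>, the top of A.
\<close>

section \<open>Lexicographic order on sequences\<close>

definition lex_seq_le :: "('a \<Rightarrow> 'a \<Rightarrow> bool) \<Rightarrow> (nat \<Rightarrow> 'a) \<Rightarrow> (nat \<Rightarrow> 'a) \<Rightarrow> bool" where
  "lex_seq_le le x y \<longleftrightarrow> (\<forall>j. (\<forall>i<j. x i = y i) \<longrightarrow> le (x j) (y j))"

lemma ex_first_difference:
  fixes x y :: "nat \<Rightarrow> 'a"
  assumes "x \<noteq> y"
  obtains k where "\<forall>i<k. x i = y i" and "x k \<noteq> y k"
  using assms exists_least_iff[of "\<lambda>i. x i \<noteq> y i"] by auto

lemma lex_k_Suc_iff:
  "lex_k le (Suc k) a b \<longleftrightarrow>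
    (\<exists>j<k. (\<forall>i<j. a i = b i) \<and> strict le (a j) (b j)) \<or> ((\<forall>i<k. a i = b i) \<and> le (a k) (b k))"
proof (induction k arbitrary: a b)
  case 0
  then show ?case by simp
next
  case (Suc k)
  show ?case
    by (simp only: lex_k.simps Suc.IH All_less_Suc2 Ex_less_Suc2) (auto simp: strict_def)
qed

lemma lex_omega_le_iff_lex_seq_le: "lex_omega_le le a b \<longleftrightarrow> lex_seq_le le a b"
proof
  assume "lex_omega_le le a b"
  then show "lex_seq_le le a b"
    unfolding lex_omega_le_def lex_seq_le_def
    by (metis lex_k_Suc_iff le_add1 plus_1_eq_Suc strict_def)
next
  assume le_ab: "lex_seq_le le a b"
  show "lex_omega_le le a b"
    unfolding lex_omega_le_def
  proof (intro allI impI)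
    fix k :: nat
    assume "k \<ge> 1"
    then obtain k' where k: "k = Suc k'"
      using not0_implies_Suc by fastforce
    show "lex_k le k a b"
    proof (cases "\<forall>i<k'. a i = b i")
      case True
      then show ?thesis
        using le_ab unfolding k lex_k_Suc_iff lex_seq_le_def by blast
    next
      case False
      then have "a \<noteq> b" by blast
      then obtain j where "\<forall>i<j. a i = b i" and "a j \<noteq> b j"
        by (rule ex_first_difference)
      moreover have "j < k'"
        using False calculation(1) by (meson not_le order_less_le_trans)
      ultimately show ?thesis
        using le_ab unfolding k lex_k_Suc_iff lex_seq_le_def strict_def by blast
    qed
  qed
qed

lemma lex_omega_le_eq_lex_seq_le: "lex_omega_le le = lex_seq_le le"
  by (intro ext) (rule lex_omega_le_iff_lex_seq_le)

lemma lex_seq_le_refl: "reflp le \<Longrightarrow> lex_seq_le le x x"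
  unfolding lex_seq_le_def by (simp add: reflpD)

lemma lex_seq_le_antisym:
  assumes "antisymp le" and "lex_seq_le le x y" and "lex_seq_le le y x"
  shows "x = y"
proof (rule ccontr)
  assume "x \<noteq> y"
  then obtain k where "\<forall>i<k. x i = y i" and "x k \<noteq> y k"
    by (rule ex_first_difference)
  then show False
    using assms unfolding lex_seq_le_def by (metis antisympD)
qed

lemma lex_seq_le_trans:
  assumes "antisymp le" and "transp le"
    and xy: "lex_seq_le le x y" and yz: "lex_seq_le le y z"
  shows "lex_seq_le le x z"
proof (cases "x = y \<or> y = z")
  case True
  then show ?thesis using xy yz by auto
next
  case False
  then obtain p q where p: "\<forall>i<p. x i = y i" "x p \<noteq> y p"
    and q: "\<forall>i<q. y i = z i" "y q \<noteq> z q"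
    by (metis ex_first_difference)
  have "le (x p) (y p)" "le (y q) (z q)"
    using p q xy yz unfolding lex_seq_le_def by auto
  show ?thesis
    unfolding lex_seq_le_def
  proof (intro allI impI)
    fix j
    assume agree: "\<forall>i<j. x i = z i"
    consider "j < p" "j < q" | "p < q" "p \<le> j" | "p = q" "p \<le> j" | "q < p" "q \<le> j"
      by linarith
    then show "le (x j) (z j)"
    proof cases
      case 1
      then have "le (x j) (y j)" using p(1) xy unfolding lex_seq_le_def by (meson less_trans)
      then show ?thesis using q 1 by simp
    next
      case 2
      then have "x p \<noteq> z p" using p q by auto
      then have "j = p" using agree 2 by (metis le_neq_implies_less)
      then show ?thesis using p q 2 \<open>le (x p) (y p)\<close> by simp
    next
      case 3
      then have "x p \<noteq> z p"
        using p q \<open>le (x p) (y p)\<close> \<open>le (y q) (z q)\<close> \<open>antisymp le\<close> by (metis antisympD)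
      then have "j = p" using agree 3 by (metis le_neq_implies_less)
      then show ?thesis using 3 \<open>le (x p) (y p)\<close> \<open>le (y q) (z q)\<close> \<open>transp le\<close> by (metis transpD)
    next
      case 4
      then have "x q \<noteq> z q" using p q by auto
      then have "j = q" using agree 4 by (metis le_neq_implies_less)
      then show ?thesis using p q 4 \<open>le (y q) (z q)\<close> by simp
    qed
  qed
qed

lemma Ccanc_iff: "z \<in> Ccanc mult \<longleftrightarrow> z \<notin> Icanc mult"
  unfolding Ccanc_def by simp

lemma Lex_omega_iff:
  "s \<in> Lex_omega mult bt \<longleftrightarrow> (\<forall>i j. s i \<notin> Icanc mult \<longrightarrow> i < j \<longrightarrow> s j = bt)"
proof
  assume "s \<in> Lex_omega mult bt"
  show "\<forall>i j. s i \<notin> Icanc mult \<longrightarrow> i < j \<longrightarrow> s j = bt"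
  proof (intro allI impI)
    fix i j
    assume "s i \<notin> Icanc mult" and "i < j"
    then obtain n where "\<forall>i<n. s i \<in> Icanc mult" and "\<forall>i>n. s i = bt"
      using \<open>s \<in> Lex_omega mult bt\<close> unfolding Lex_omega_def by blast
    then show "s j = bt"
      using \<open>s i \<notin> Icanc mult\<close> \<open>i < j\<close> by (meson le_less_trans not_le)
  qed
next
  assume tail: "\<forall>i j. s i \<notin> Icanc mult \<longrightarrow> i < j \<longrightarrow> s j = bt"
  show "s \<in> Lex_omega mult bt"
  proof (cases "\<forall>i. s i \<in> Icanc mult")
    case False
    then obtain n where "s n \<notin> Icanc mult" and "\<forall>i<n. s i \<in> Icanc mult"
      using exists_least_iff[of "\<lambda>i. s i \<notin> Icanc mult"] by blast
    then show ?thesis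
      using tail unfolding Lex_omega_def by blast
  qed (simp add: Lex_omega_def)
qed

lemma Lex_omega_shift:
  "s \<in> Lex_omega mult bt \<Longrightarrow> (\<lambda>i. s (i + m)) \<in> Lex_omega mult bt"
  unfolding Lex_omega_iff by simp

section \<open>Residuated partially ordered monoids with a least element\<close>

locale residuated_pom_bot =
  fixes le :: "'a \<Rightarrow> 'a \<Rightarrow> bool" and mult res :: "'a \<Rightarrow> 'a \<Rightarrow> 'a" and one bt :: 'a
  assumes residuated_pom: "residuated_pom UNIV le mult res one"
    and bot_le: "\<And>x. le bt x"
begin

lemma ord_refl: "le x x"
  using residuated_pom unfolding residuated_pom_def by (metis UNIV_I)

lemma ord_antisym: "le x y \<Longrightarrow> le y x \<Longrightarrow> x = y"
  using residuated_pom unfolding residuated_pom_def by (metis UNIV_I)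

lemma ord_trans: "le x y \<Longrightarrow> le y z \<Longrightarrow> le x z"
  using residuated_pom unfolding residuated_pom_def by (metis UNIV_I)

lemma m_assoc: "mult (mult x y) z = mult x (mult y z)"
  using residuated_pom unfolding residuated_pom_def by (metis UNIV_I)

lemma m_comm: "mult x y = mult y x"
  using residuated_pom unfolding residuated_pom_def by (metis UNIV_I)

lemma r_one: "mult x one = x"
  using residuated_pom unfolding residuated_pom_def by (metis UNIV_I)

lemma residuation: "le (mult b c) a \<longleftrightarrow> le c (res a b)"
  using residuated_pom unfolding residuated_pom_def by (metis UNIV_I)

lemma reflp_le: "reflp le"
  by (rule reflpI) (rule ord_refl)

lemma antisymp_le: "antisymp le"
  by (rule antisympI) (rule ord_antisym)

lemma transp_le: "transp le"
  by (rule transpI) (rule ord_trans)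

lemma mult_res_le: "le (mult b (res a b)) a"
  using residuation ord_refl by blast

lemma mult_mono:
  assumes "le x y"
  shows "le (mult z x) (mult z y)"
proof -
  have "le y (res (mult z y) z)"
    using residuation ord_refl by blast
  with assms have "le x (res (mult z y) z)"
    by (rule ord_trans)
  then show ?thesis
    using residuation by blast
qed

lemma mult_bot: "mult x bt = bt"
  using residuation bot_le ord_antisym by blast

lemma bot_mult: "mult bt x = bt"
  using mult_bot m_comm by metis

lemma le_res_bot: "le x (res y bt)"
  using residuation bot_mult bot_le by metis

lemma Icanc_mult: "x \<in> Icanc mult \<Longrightarrow> y \<in> Icanc mult \<Longrightarrow> mult x y \<in> Icanc mult"
  unfolding Icanc_def mem_Collect_eq by (metis m_assoc)

lemma one_Icanc: "one \<in> Icanc mult"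
  unfolding Icanc_def by (simp add: r_one)

lemma Icanc_eq_res:
  assumes "b \<in> Icanc mult" and "mult b c = a" and "le c (res a b)"
  shows "c = res a b"
proof -
  have "le (mult b c) (mult b (res a b))"
    using assms(3) by (rule mult_mono)
  moreover have "le (mult b (res a b)) (mult b c)"
    using assms(2) mult_res_le by simp
  ultimately have "mult c b = mult (res a b) b"
    using ord_antisym m_comm by metis
  then show ?thesis
    using assms(1) unfolding Icanc_def by blast
qed

lemma mult_in_Lex_omega:
  assumes "a \<in> Lex_omega mult bt" and "b \<in> Lex_omega mult bt"
  shows "(\<lambda>i. mult (a i) (b i)) \<in> Lex_omega mult bt"
  unfolding Lex_omega_iff
proof (intro allI impI)
  fix i j
  assume "mult (a i) (b i) \<notin> Icanc mult" and "i < j"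
  then have "a j = bt \<or> b j = bt"
    using assms Icanc_mult unfolding Lex_omega_iff by blast
  then show "mult (a j) (b j) = bt"
    using mult_bot bot_mult by auto
qed

lemma one_in_Lex_omega: "(\<lambda>_. one) \<in> Lex_omega mult bt"
  using one_Icanc unfolding Lex_omega_iff by simp

lemma lex_top_greatest:
  shows "lex_top le mult bt \<in> Lex_omega mult bt"
    and "x \<in> Lex_omega mult bt \<Longrightarrow> lex_seq_le le x (lex_top le mult bt)"
proof -
  define t where "t = res bt bt" \<comment> \<open>the greatest element of A, cf. \<open>le_res_bot\<close>\<close>
  define g :: "nat \<Rightarrow> 'a" where "g = (if t \<in> Icanc mult then (\<lambda>_. t) else (\<lambda>i. if i = 0 then t else bt))"
  have g_in: "g \<in> Lex_omega mult bt"
    unfolding Lex_omega_iff g_def by auto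
  have g_greatest: "lex_seq_le le x g" if x_in: "x \<in> Lex_omega mult bt" for x
    unfolding lex_seq_le_def
  proof (intro allI impI)
    fix j
    assume agree: "\<forall>i<j. x i = g i"
    show "le (x j) (g j)"
    proof (cases "t \<in> Icanc mult \<or> j = 0")
      case True
      then show ?thesis
        unfolding g_def t_def by (auto simp: le_res_bot)
    next
      case False
      then have "x 0 \<notin> Icanc mult"
        using agree unfolding g_def by auto
      then have "x j = bt"
        using x_in False unfolding Lex_omega_iff by blast
      then show ?thesis
        by (simp add: bot_le)
    qed
  qed
  have "\<exists>!g. g \<in> Lex_omega mult bt \<and> (\<forall>x\<in>Lex_omega mult bt. lex_omega_le le x g)"
    unfolding lex_omega_le_eq_lex_seq_le
    using g_in g_greatest lex_seq_le_antisym[OF antisymp_le] by (intro ex1I[of _ g]) auto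
  from theI'[OF this]
  show "lex_top le mult bt \<in> Lex_omega mult bt"
    and "x \<in> Lex_omega mult bt \<Longrightarrow> lex_seq_le le x (lex_top le mult bt)"
    unfolding lex_top_def lex_omega_le_eq_lex_seq_le by auto
qed

section \<open>The residual on Lex\<omega>\<close>

lemma strict_mult_res_iff: "strict le (mult (res x y) y) x \<longleftrightarrow> mult y (res x y) \<noteq> x"
  unfolding strict_def using mult_res_le[of y x] m_comm[of y "res x y"] by auto

lemma res_omega_cases:
  fixes a b :: "nat \<Rightarrow> 'a"
  obtains
    (exact) "\<forall>i. res (a i) (b i) \<in> Icanc mult"
      "\<forall>i. mult (b i) (res (a i) (b i)) = a i"
      "res_omega le mult res bt a b = (\<lambda>i. res (a i) (b i))"
  | (non_cancellative) g where "res (a g) (b g) \<notin> Icanc mult"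
      "\<forall>i<g. res (a i) (b i) \<in> Icanc mult"
      "\<forall>i<g. mult (b i) (res (a i) (b i)) = a i"
      "res_omega le mult res bt a b = (\<lambda>i. if i \<le> g then res (a i) (b i) else bt)"
  | (inexact) d where "mult (b d) (res (a d) (b d)) \<noteq> a d"
      "\<forall>i\<le>d. res (a i) (b i) \<in> Icanc mult"
      "\<forall>i<d. mult (b i) (res (a i) (b i)) = a i"
      "res_omega le mult res bt a b =
         (\<lambda>i. if i \<le> d then res (a i) (b i) else lex_top le mult bt (i - Suc d))"
proof -
  define P where "P i \<longleftrightarrow> res (a i) (b i) \<notin> Icanc mult" for i
  define Q where "Q i \<longleftrightarrow> mult (b i) (res (a i) (b i)) \<noteq> a i" for i
  \<comment> \<open>0-based: \<open>gamma\<close> and \<open>delta\<close> are \<open>Suc g\<close> and \<open>Suc d\<close> when finite\<close>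
  define g where "g = (LEAST i. P i)"
  define d where "d = (LEAST i. Q i)"
  have gamma: "gamma mult res a b = (if \<exists>i. P i then enat (Suc g) else \<infinity>)"
    unfolding gamma_def P_def g_def Ccanc_iff ..
  have delta: "delta le mult res a b = (if \<exists>i. Q i then enat (Suc d) else \<infinity>)"
    unfolding delta_def Q_def d_def strict_mult_res_iff ..
  have before_g: "\<forall>i<g. \<not> P i"
    unfolding g_def using not_less_Least by blast
  have before_d: "\<forall>i<d. \<not> Q i"
    unfolding d_def using not_less_Least by blast
  consider (none) "\<not> (\<exists>i. P i)" "\<not> (\<exists>i. Q i)"
    | (P_first) "\<exists>i. P i" "\<not> (\<exists>i. Q i) \<or> g \<le> d"
    | (Q_first) "\<exists>i. Q i" "\<not> (\<exists>i. P i) \<or> d < g"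
    by (metis not_le)
  then show ?thesis
  proof cases
    case none
    then show ?thesis
      using exact unfolding res_omega_def gamma delta Let_def P_def Q_def by auto
  next
    case P_first
    have "P g"
      unfolding g_def using P_first(1) by (rule LeastI_ex)
    moreover have "\<forall>i<g. \<not> Q i"
      using P_first(2) before_d by auto
    moreover have "res_omega le mult res bt a b = (\<lambda>i. if i \<le> g then res (a i) (b i) else bt)"
      unfolding res_omega_def gamma delta Let_def using P_first by auto
    ultimately show ?thesis
      using non_cancellative[of g] before_g unfolding P_def Q_def by auto
  next
    case Q_first
    have "Q d"
      unfolding d_def using Q_first(1) by (rule LeastI_ex)
    moreover have "\<forall>i\<le>d. \<not> P i"
      using Q_first(2) before_g by auto
    moreover have "res_omega le mult res bt a b =
        (\<lambda>i. if i \<le> d then res (a i) (b i) else lex_top le mult bt (i - Suc d))"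
      unfolding res_omega_def gamma delta Let_def using Q_first by auto
    ultimately show ?thesis
      using inexact[of d] before_d unfolding P_def Q_def by auto
  qed
qed

lemma res_omega_in_Lex_omega: "res_omega le mult res bt a b \<in> Lex_omega mult bt"
  unfolding Lex_omega_iff
proof (intro allI impI)
  fix i j
  assume non_canc: "res_omega le mult res bt a b i \<notin> Icanc mult" and "i < j"
  from res_omega_cases[of a b] show "res_omega le mult res bt a b j = bt"
  proof cases
    case exact
    then show ?thesis using non_canc by simp
  next
    case (non_cancellative g)
    have "g \<le> i"
      using non_canc non_cancellative(2,4) by (cases "i < g") auto
    then show ?thesis
      using non_cancellative(4) \<open>i < j\<close> by simp
  next
    case (inexact d)
    have "d < i"
      using non_canc inexact(2,4) by (cases "i \<le> d") auto
    moreover have "lex_top le mult bt (i - Suc d) \<notin> Icanc mult"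
      using non_canc inexact(4) \<open>d < i\<close> by simp
    moreover have "i - Suc d < j - Suc d"
      using \<open>d < i\<close> \<open>i < j\<close> by simp
    ultimately show ?thesis
      using inexact(4) lex_top_greatest(1) unfolding Lex_omega_iff by auto
  qed
qed

lemma res_omega_eq_res_or_bot:
  assumes "\<forall>i<k. mult (b i) (res_omega le mult res bt a b i) = a i"
  shows "res_omega le mult res bt a b k = res (a k) (b k) \<or> res_omega le mult res bt a b k = bt"
  using res_omega_cases[of a b]
proof cases
  case (inexact d)
  then have "\<not> d < k"
    using assms by auto
  then show ?thesis
    using inexact(4) by simp
qed auto

lemma eq_bot_after_lt_res:
  assumes "b \<in> Lex_omega mult bt" and "k < j"
    and "mult (b k) (c k) = a k" and "le (c k) (res (a k) (b k))" and "c k \<noteq> res (a k) (b k)"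
  shows "b j = bt"
proof -
  have "b k \<notin> Icanc mult"
    using Icanc_eq_res[of "b k" "c k" "a k"] assms(3-5) by blast
  then show ?thesis
    using assms(1,2) unfolding Lex_omega_iff by blast
qed

lemma lex_seq_le_mult_if_le_res_omega:
  assumes b_in: "b \<in> Lex_omega mult bt"
    and c_le: "lex_seq_le le c (res_omega le mult res bt a b)"
  shows "lex_seq_le le (\<lambda>i. mult (b i) (c i)) a"
proof -
  define R where "R = res_omega le mult res bt a b"
  have "le (c j) (res (a j) (b j))" if prefix: "\<forall>i<j. mult (b i) (c i) = a i" for j
  proof (cases "\<forall>i\<le>j. c i = R i")
    case True
    then have "\<forall>i<j. mult (b i) (R i) = a i"
      using prefix by simp
    then have "R j = res (a j) (b j) \<or> R j = bt"
      unfolding R_def by (rule res_omega_eq_res_or_bot)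
    then show ?thesis
      using True ord_refl bot_le by auto
  next
    case False
    then obtain k where "k \<le> j" and agree: "\<forall>i<k. c i = R i" and "c k \<noteq> R k"
      using exists_least_iff[of "\<lambda>i. c i \<noteq> R i"] by (meson le_trans not_le)
    have "le (c k) (R k)"
      using c_le agree unfolding R_def lex_seq_le_def by blast
    have "\<forall>i<k. mult (b i) (c i) = a i"
      using prefix \<open>k \<le> j\<close> by auto
    then have "\<forall>i<k. mult (b i) (R i) = a i"
      using agree by auto
    then have "R k = res (a k) (b k) \<or> R k = bt"
      unfolding R_def by (rule res_omega_eq_res_or_bot)
    then have "R k = res (a k) (b k)"
      using \<open>le (c k) (R k)\<close> \<open>c k \<noteq> R k\<close> bot_le ord_antisym by blast
    show ?thesis
    proof (cases "k = j")
      case True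
      then show ?thesis
        using \<open>le (c k) (R k)\<close> \<open>R k = res (a k) (b k)\<close> by simp
    next
      case False
      then have "k < j"
        using \<open>k \<le> j\<close> by simp
      moreover have "mult (b k) (c k) = a k"
        using prefix \<open>k < j\<close> by simp
      ultimately have "b j = bt"
        using eq_bot_after_lt_res[OF b_in] \<open>le (c k) (R k)\<close> \<open>c k \<noteq> R k\<close>
          \<open>R k = res (a k) (b k)\<close> by simp
      then show ?thesis
        by (simp add: le_res_bot)
    qed
  qed
  then show ?thesis
    unfolding lex_seq_le_def residuation by blast
qed

lemma le_res_omega_if_lex_seq_le_mult:
  assumes c_in: "c \<in> Lex_omega mult bt"
    and mult_le: "lex_seq_le le (\<lambda>i. mult (b i) (c i)) a"
  shows "lex_seq_le le c (res_omega le mult res bt a b)"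
  unfolding lex_seq_le_def
proof (intro allI impI)
  fix j
  define R where "R = res_omega le mult res bt a b"
  assume agree: "\<forall>i<j. c i = R i"
  have le_res: "le (c j) (res (a j) (b j))" if "\<forall>i<j. mult (b i) (c i) = a i"
    using mult_le that unfolding lex_seq_le_def residuation by blast
  from res_omega_cases[of a b] show "le (c j) (R j)"
  proof cases
    case exact
    then show ?thesis
      using le_res agree unfolding R_def by simp
  next
    case (non_cancellative g)
    show ?thesis
    proof (cases "j \<le> g")
      case True
      then show ?thesis
        using le_res agree non_cancellative(3,4) unfolding R_def by simp
    next
      case False
      then have "c g \<notin> Icanc mult"
        using agree non_cancellative(1,4) unfolding R_def by simp
      then have "c j = bt"
        using c_in False unfolding Lex_omega_iff by simp
      then show ?thesis
        by (simp add: bot_le)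
    qed
  next
    case (inexact d)
    show ?thesis
    proof (cases "j \<le> d")
      case True
      then show ?thesis
        using le_res agree inexact(3,4) unfolding R_def by simp
    next
      case False
      define T where "T = lex_top le mult bt"
      define c' where "c' i = c (i + Suc d)" for i
      have "c' \<in> Lex_omega mult bt"
        unfolding c'_def using c_in by (rule Lex_omega_shift)
      then have "lex_seq_le le c' T"
        unfolding T_def by (rule lex_top_greatest(2))
      moreover have "\<forall>i<j - Suc d. c' i = T i"
        using agree inexact(4) False unfolding R_def c'_def T_def by auto
      ultimately have "le (c' (j - Suc d)) (T (j - Suc d))"
        unfolding lex_seq_le_def by blast
      then show ?thesis
        using False inexact(4) unfolding R_def c'_def T_def by simp
    qed
  qed
qed

lemma lex_seq_le_mult_iff_le_res_omega:
  assumes "b \<in> Lex_omega mult bt" and "c \<in> Lex_omega mult bt"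
  shows "lex_seq_le le (\<lambda>i. mult (b i) (c i)) a \<longleftrightarrow> lex_seq_le le c (res_omega le mult res bt a b)"
  using assms lex_seq_le_mult_if_le_res_omega le_res_omega_if_lex_seq_le_mult by blast

end

theorem proposition7:
  fixes le :: "'a \<Rightarrow> 'a \<Rightarrow> bool"
    and mult res :: "'a \<Rightarrow> 'a \<Rightarrow> 'a"
    and one bt :: 'a
  assumes "residuated_pom UNIV le mult res one"
    and "\<forall>x. le bt x"
  shows "residuated_pom (Lex_omega mult bt) (lex_omega_le le)
           (\<lambda>a b i. mult (a i) (b i)) (res_omega le mult res bt) (\<lambda>_. one)"
proof -
  interpret residuated_pom_bot le mult res one bt
    using assms by unfold_locales auto
  let ?L = "Lex_omega mult bt"
  show ?thesis
    unfolding residuated_pom_def lex_omega_le_eq_lex_seq_le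
  proof (intro conjI ballI impI)
    fix x y z
    assume "x \<in> ?L" and "y \<in> ?L" and "z \<in> ?L"
    show "lex_seq_le le x x"
      using reflp_le by (rule lex_seq_le_refl)
    show "x = y" if "lex_seq_le le x y \<and> lex_seq_le le y x"
      using that lex_seq_le_antisym[OF antisymp_le] by blast
    show "lex_seq_le le x z" if "lex_seq_le le x y \<and> lex_seq_le le y z"
      using that lex_seq_le_trans[OF antisymp_le transp_le] by blast
    show "(\<lambda>i. mult (x i) (y i)) \<in> ?L"
      using \<open>x \<in> ?L\<close> \<open>y \<in> ?L\<close> by (rule mult_in_Lex_omega)
    show "res_omega le mult res bt x y \<in> ?L"
      by (rule res_omega_in_Lex_omega)
    show "(\<lambda>i. mult (mult (x i) (y i)) (z i)) = (\<lambda>i. mult (x i) (mult (y i) (z i)))"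
      by (simp add: m_assoc)
    show "(\<lambda>i. mult (x i) (y i)) = (\<lambda>i. mult (y i) (x i))"
      by (simp add: m_comm)
    show "(\<lambda>i. mult (x i) one) = x"
      by (simp add: r_one)
    show "lex_seq_le le (\<lambda>i. mult (y i) (z i)) x \<longleftrightarrow> lex_seq_le le z (res_omega le mult res bt x y)"
      using \<open>y \<in> ?L\<close> \<open>z \<in> ?L\<close> by (rule lex_seq_le_mult_iff_le_res_omega)
  qed (rule one_in_Lex_omega)
qed

end
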